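(* Let $n\ge2$ and let $P=(p_{ij})$ be an $n\times n$ checkerboard copula. Then there exist indices $i<i'$ and $j<j'$ in $\{1,\dots,n\}$ such that at least one of the following holds: (i) $p_{ij}\ge n^{-2}$ and $p_{i'j'}\ge n^{-2}$; (ii) $p_{i'j}\ge n^{-2}$ and $p_{ij'}\ge n^{-2}$.
   Context: An $n\times n$ checkerboard copula is a real $n\times n$ matrix with nonnegative entries whose row and column sums all equal $\frac1n$. *)

theory Defs
  imports Main "HOL.Real"
begin

definition checkerboard_copula :: "nat \<Rightarrow> (nat \<Rightarrow> nat \<Rightarrow> real) \<Rightarrow> bool" where
  "checkerboard_copula n P \<longleftrightarrow>
     (\<forall>i<n. \<forall>j<n. 0 \<le> P i j) \<and>
     (\<forall>i<n. (\<Sum>j<n. P i j) = 1 / real n) \<and>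
     (\<forall>j<n. (\<Sum>i<n. P i j) = 1 / real n)"

end

theory Submission
  imports Defs
begin

text \<open>Each row and each column of P sums to 1/n over n entries, so by averaging it contains
  an entry of size at least 1/n^2. Two such entries in rows 0 and 1 either lie in different
  columns already, or they share a column a; then a large entry in some other column lies in a
  row different from 0 or from 1. Two large entries in different rows and different columns form
  a diagonal or an anti-diagonal pair.\<close>

lemma exists_ge_average:
  fixes f :: "'a \<Rightarrow> 'b::linordered_field"
  assumes "finite A" and "A \<noteq> {}"
  shows "\<exists>x\<in>A. sum f A / of_nat (card A) \<le> f x"
proof (rule ccontr)
  assume "\<not> ?thesis"
  then have "sum f A < (\<Sum>x\<in>A. sum f A / of_nat (card A))"
    using assms by (intro sum_strict_mono) auto
  also have "\<dots> = sum f A"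
    using assms by simp
  finally show False by simp
qed

lemma checkerboard_copula_transpose:
  "checkerboard_copula n (\<lambda>i j. P j i) \<longleftrightarrow> checkerboard_copula n P"
  unfolding checkerboard_copula_def by auto

lemma checkerboard_copula_row_entry_ge:
  assumes "checkerboard_copula n P" and "i < n"
  shows "\<exists>j<n. 1 / (real n)^2 \<le> P i j"
proof -
  obtain j where "j < n" and j: "(\<Sum>j<n. P i j) / real n \<le> P i j"
    using exists_ge_average[of "{..<n}" "P i"] assms(2) by auto
  have "(\<Sum>j<n. P i j) / real n = 1 / (real n)^2"
    using assms unfolding checkerboard_copula_def by (simp add: power2_eq_square)
  with \<open>j < n\<close> j show ?thesis by auto
qed

lemma checkerboard_copula_column_entry_ge:
  assumes "checkerboard_copula n P" and "j < n"
  shows "\<exists>i<n. 1 / (real n)^2 \<le> P i j"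
  using checkerboard_copula_row_entry_ge[OF checkerboard_copula_transpose[THEN iffD2, OF assms(1)]
      assms(2)] .

lemma marked_in_distinct_rows_and_columns:
  fixes Q :: "nat \<Rightarrow> nat \<Rightarrow> bool"
  assumes "2 \<le> n"
    and rows: "\<And>i. i < n \<Longrightarrow> \<exists>j<n. Q i j"
    and columns: "\<And>j. j < n \<Longrightarrow> \<exists>i<n. Q i j"
  shows "\<exists>i i' j j'. i < n \<and> i' < n \<and> j < n \<and> j' < n \<and> i \<noteq> i' \<and> j \<noteq> j' \<and>
           Q i j \<and> Q i' j'"
proof -
  obtain a where a: "a < n" "Q 0 a" using rows[of 0] assms(1) by auto
  obtain b where b: "b < n" "Q 1 b" using rows[of 1] assms(1) by auto
  show ?thesis
  proof (cases "a = b")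
    case False
    show ?thesis
      by (rule exI[of _ 0], rule exI[of _ 1], rule exI[of _ a], rule exI[of _ b])
        (use a b \<open>a \<noteq> b\<close> assms(1) in auto)
  next
    case True
    define d where "d = (if a = 0 then 1 else 0 :: nat)"
    have d: "d < n" "d \<noteq> a" using assms(1) by (auto simp: d_def)
    obtain r where r: "r < n" "Q r d" using columns[OF d(1)] by blast
    show ?thesis
    proof (cases "r = 0")
      case True
      show ?thesis
        by (rule exI[of _ 0], rule exI[of _ 1], rule exI[of _ d], rule exI[of _ b])
          (use r b d \<open>r = 0\<close> \<open>a = b\<close> assms(1) in auto)
    next
      case False
      show ?thesis
        by (rule exI[of _ 0], rule exI[of _ r], rule exI[of _ a], rule exI[of _ d])
          (use r a d \<open>r \<noteq> 0\<close> in auto)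
    qed
  qed
qed

lemma diagonal_or_antidiagonal_pair:
  fixes Q :: "nat \<Rightarrow> nat \<Rightarrow> bool"
  assumes "Q i j" "Q i' j'" "i \<noteq> i'" "j \<noteq> j'" "i < n" "i' < n" "j < n" "j' < n"
  shows "\<exists>i i' j j'. i < i' \<and> i' < n \<and> j < j' \<and> j' < n \<and>
           ((Q i j \<and> Q i' j') \<or> (Q i' j \<and> Q i j'))"
proof -
  consider "i < i'" "j < j'" | "i < i'" "j' < j" | "i' < i" "j < j'" | "i' < i" "j' < j"
    using assms(3,4) by linarith
  then show ?thesis
    by cases (use assms in blast)+
qed

theorem lemma5:
  fixes n :: nat and P :: "nat \<Rightarrow> nat \<Rightarrow> real"
  assumes "n \<ge> 2" and "checkerboard_copula n P"
  shows "\<exists>i i' j j'. i < i' \<and> i' < n \<and> j < j' \<and> j' < n \<and>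
           ((P i j \<ge> 1 / (real n)^2 \<and> P i' j' \<ge> 1 / (real n)^2) \<or>
            (P i' j \<ge> 1 / (real n)^2 \<and> P i j' \<ge> 1 / (real n)^2))"
proof -
  let ?large = "\<lambda>i j. 1 / (real n)^2 \<le> P i j"
  obtain i i' j j' where "?large i j" "?large i' j'" "i \<noteq> i'" "j \<noteq> j'"
    "i < n" "i' < n" "j < n" "j' < n"
    using marked_in_distinct_rows_and_columns[OF assms(1)
        checkerboard_copula_row_entry_ge[OF assms(2)] checkerboard_copula_column_entry_ge[OF assms(2)]]
    by blast
  then show ?thesis
    by (rule diagonal_or_antidiagonal_pair[where Q = ?large])
qed

end
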